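(* Let $k\ge2$ be an integer and $n\ge1$ a natural number. Then $(L_k^{(1)})^n=L_k^{(n)}\,(L_k^{(0)})^{n-1}$.
   Context: Fix an integer $k\ge2$. Let $Q_k$ be the $k\times k$ matrix whose first row is all ones, with $(Q_k)_{i+1,i}=1$ for $1\le i\le k-1$ and all other entries $0$, and for $r\in\mathbb Z$ let $Q_k^r$ denote its $r$-th power. The generalized Lucas sequence of order $k$, $(l_{k,n})_{n\in\mathbb Z}$, is the two-sided sequence satisfying $l_{k,n+k}=l_{k,n+k-1}+\dots+l_{k,n}$ for all $n\in\mathbb Z$ with initial values $l_{k,r}=\operatorname{trace}(Q_k^r)$ for $0\le r\le k-1$ (so $l_{k,0}=k$ and $l_{k,r}=2^r-1$ for $1\le r\le k-1$). For $n\in\mathbb Z$ the generalized Lucas matrix $L_k^{(n)}$ is the $k\times k$ matrix with entries $(L_k^{(n)})_{i,1}=l_{k,k+n-i}$ and $(L_k^{(n)})_{i,j}=\sum_{m=n-i+j-1}^{k+n-i-1} l_{k,m}$ for $2\le j\le k$, $1\le i\le k$. *)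

theory Defs
  imports "Jordan_Normal_Form.Matrix"
begin

definition Qmat :: "nat \<Rightarrow> int mat" where
  "Qmat k = mat k k (\<lambda>(i, j). if i = 0 then 1 else if i = j + 1 then 1 else 0)"

definition mat_trace :: "int mat \<Rightarrow> int" where
  "mat_trace A = (\<Sum>i<dim_row A. A $$ (i, i))"

definition gen_lucas :: "nat \<Rightarrow> int \<Rightarrow> int" where
  "gen_lucas k = (THE f. (\<forall>n::int. f (n + int k) = (\<Sum>j<k. f (n + int j))) \<and>
                        (\<forall>r<k. f (int r) = mat_trace (Qmat k ^\<^sub>m r)))"

text \<open>The generalized Lucas matrix L_k^(n), written with 0-based indices
  (paper's row i, column j correspond to i+1, j+1 here).\<close>
definition lucas_mat :: "nat \<Rightarrow> int \<Rightarrow> int mat" where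
  "lucas_mat k n = mat k k (\<lambda>(i, j).
     if j = 0 then gen_lucas k (int k + n - int i - 1)
     else (\<Sum>m \<in> {n - int i + int j - 1 .. int k + n - int i - 2}. gen_lucas k m))"

end

theory Submission
  imports Defs
begin

(* Q_k L^(n) = L^(n+1) = L^(n) Q_k: comparing entries, both identities reduce to sums of
   consecutive terms of a sequence satisfying the order-k recurrence, and nothing else about
   the Lucas numbers is needed; gen_lucas satisfies the recurrence because it has a unique
   two-sided solution for every choice of initial values. Hence Q_k commutes with L^(0),
   L^(1) = Q_k L^(0) and L^(n) = Q_k^n L^(0), so that
   (L^(1))^n = Q_k^n (L^(0))^n = L^(n) (L^(0))^(n-1). *)

definition kbonacci :: "nat \<Rightarrow> (int \<Rightarrow> 'a::comm_monoid_add) \<Rightarrow> bool" where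
  "kbonacci k f \<longleftrightarrow> (\<forall>n. f (n + int k) = (\<Sum>j<k. f (n + int j)))"

lemma kbonacci_backward:
  fixes f :: "int \<Rightarrow> 'a::ab_group_add"
  assumes "k \<ge> 1" and "kbonacci k f"
  shows "f n = f (n + int k) - (\<Sum>j\<in>{1..<k}. f (n + int j))"
  using assms by (simp add: kbonacci_def lessThan_atLeast0 sum.atLeast_Suc_lessThan)

lemma kbonacci_unique:
  fixes f g :: "int \<Rightarrow> 'a::ab_group_add"
  assumes k: "k \<ge> 1" and f: "kbonacci k f" and g: "kbonacci k g"
    and init: "\<forall>r<k. f (int r) = g (int r)"
  shows "f = g"
proof -
  define agree_from where "agree_from p \<longleftrightarrow> (\<forall>j<k. f (p + int j) = g (p + int j))" for p
  have window: "agree_from p" for p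
  proof (induction p rule: int_induct[where k = 0])
    case base
    show ?case using init by (simp add: agree_from_def)
  next
    case (step1 p)
    then have IH: "f (p + int j) = g (p + int j)" if "j < k" for j
      using that by (simp add: agree_from_def)
    then have "f (p + int k) = g (p + int k)"
      using f g by (simp add: kbonacci_def)
    with IH have "f (p + int j) = g (p + int j)" if "j \<le> k" for j
      using that by (cases "j = k") auto
    from this[of "Suc _"] show ?case
      by (simp add: agree_from_def algebra_simps)
  next
    case (step2 p)
    have shifted: "f (p - 1 + int j) = g (p - 1 + int j)" if j: "1 \<le> j" "j \<le> k" for j
    proof -
      obtain i where "j = Suc i" "i < k"
        using j by (cases j) auto
      moreover have "p - 1 + int (Suc i) = p + int i"
        by simp
      ultimately show ?thesis
        using step2.IH by (simp only: agree_from_def)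
    qed
    have "f (p - 1) = f (p - 1 + int k) - (\<Sum>j\<in>{1..<k}. f (p - 1 + int j))"
      by (rule kbonacci_backward[OF k f])
    also have "\<dots> = g (p - 1 + int k) - (\<Sum>j\<in>{1..<k}. g (p - 1 + int j))"
      using k by (intro arg_cong2[where f = minus] sum.cong refl shifted) auto
    also have "\<dots> = g (p - 1)"
      by (rule kbonacci_backward[OF k g, symmetric])
    finally have "f (p - 1) = g (p - 1)" .
    with shifted have "f (p - 1 + int j) = g (p - 1 + int j)" if "j < k" for j
      using that by (cases "j = 0") auto
    then show ?case
      by (simp add: agree_from_def)
  qed
  show ?thesis
  proof
    fix p
    show "f p = g p"
      using window[of p] k by (auto simp: agree_from_def dest: spec[where x = 0])
  qed
qed

function kbonacci_ext :: "nat \<Rightarrow> (int \<Rightarrow> 'a::ab_group_add) \<Rightarrow> int \<Rightarrow> 'a" where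
  "kbonacci_ext k c n =
     (if k = 0 then 0
      else if 0 \<le> n \<and> n < int k then c n
      else if n \<ge> int k then (\<Sum>j<k. kbonacci_ext k c (n - int k + int j))
      else kbonacci_ext k c (n + int k) - (\<Sum>j\<in>{1..<k}. kbonacci_ext k c (n + int j)))"
  by pat_completeness auto
termination
  by (relation "measure (\<lambda>(k, c, n). if n < 0 then nat (- n) else if n < int k then 0 else nat n)")
    auto

declare kbonacci_ext.simps [simp del]

lemma kbonacci_ext_init: "r < k \<Longrightarrow> kbonacci_ext k c (int r) = c (int r)"
  by (subst kbonacci_ext.simps) simp

lemma kbonacci_kbonacci_ext:
  assumes "k \<ge> 1"
  shows "kbonacci k (kbonacci_ext k c)"
  unfolding kbonacci_def
proof
  fix n
  show "kbonacci_ext k c (n + int k) = (\<Sum>j<k. kbonacci_ext k c (n + int j))"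
  proof (cases "n \<ge> 0")
    case True
    then show ?thesis using assms by (subst kbonacci_ext.simps) simp
  next
    case False
    then have "kbonacci_ext k c n =
        kbonacci_ext k c (n + int k) - (\<Sum>j\<in>{1..<k}. kbonacci_ext k c (n + int j))"
      using assms by (subst kbonacci_ext.simps) simp
    then show ?thesis
      using assms by (simp add: lessThan_atLeast0 sum.atLeast_Suc_lessThan)
  qed
qed

lemma sum_atLeastAtMost_int_shift:
  fixes a b c :: int
  shows "(\<Sum>x\<in>{a + c..b + c}. f x) = (\<Sum>x\<in>{a..b}. f (x + c))"
  using sum.reindex[of "\<lambda>x. x + c" "{a..b}" f] by (simp add: comp_def)

lemma kbonacci_sum_window:
  assumes "kbonacci k f"
  shows "(\<Sum>m\<in>{p..p + int k - 1}. f m) = f (p + int k)"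
proof -
  have "(\<Sum>m\<in>{p..p + int k - 1}. f m) = (\<Sum>j<k. f (p + int j))"
    by (rule sum.reindex_bij_witness[of _ "\<lambda>j. p + int j" "\<lambda>m. nat (m - p)"]) auto
  then show ?thesis
    using assms by (simp add: kbonacci_def)
qed

lemma kbonacci_sum_back:
  assumes "kbonacci k f"
  shows "(\<Sum>l<k. f (m - int l)) = f (m + 1)"
proof -
  have "(\<Sum>l<k. f (m - int l)) = (\<Sum>j<k. f (m + 1 - int k + int j))"
    by (rule sum.reindex_bij_witness[of _ "\<lambda>j. k - Suc j" "\<lambda>l. k - Suc l"]) (auto simp: of_nat_diff)
  also have "\<dots> = f (m + 1 - int k + int k)"
    using assms by (simp only: kbonacci_def)
  finally show ?thesis
    by simp
qed

lemma kbonacci_sum_windows: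
  assumes "kbonacci k f"
  shows "(\<Sum>l<k. \<Sum>x\<in>{a - int l..b - int l}. f x) = (\<Sum>x\<in>{a + 1..b + 1}. f x)"
proof -
  have "(\<Sum>x\<in>{a - int l..b - int l}. f x) = (\<Sum>x\<in>{a..b}. f (x - int l))" for l
    using sum_atLeastAtMost_int_shift[of f a "- int l" b] by simp
  then have "(\<Sum>l<k. \<Sum>x\<in>{a - int l..b - int l}. f x) = (\<Sum>l<k. \<Sum>x\<in>{a..b}. f (x - int l))"
    by simp
  also have "\<dots> = (\<Sum>x\<in>{a..b}. \<Sum>l<k. f (x - int l))"
    by (rule sum.swap)
  also have "\<dots> = (\<Sum>x\<in>{a..b}. f (x + 1))"
    using assms by (simp add: kbonacci_sum_back)
  also have "\<dots> = (\<Sum>x\<in>{a + 1..b + 1}. f x)"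
    by (rule sum_atLeastAtMost_int_shift[symmetric])
  finally show ?thesis .
qed

lemma kbonacci_gen_lucas:
  assumes "k \<ge> 1"
  shows "kbonacci k (gen_lucas k)"
proof -
  let ?P = "\<lambda>f. (\<forall>n::int. f (n + int k) = (\<Sum>j<k. f (n + int j))) \<and>
                 (\<forall>r<k. f (int r) = mat_trace (Qmat k ^\<^sub>m r))"
  define f where "f = kbonacci_ext k (\<lambda>n. mat_trace (Qmat k ^\<^sub>m nat n))"
  have "?P f"
    using kbonacci_kbonacci_ext[OF assms] by (simp add: f_def kbonacci_def kbonacci_ext_init)
  moreover have "g = f" if "?P g" for g
    using kbonacci_unique[OF assms, of g f] that \<open>?P f\<close> by (simp add: kbonacci_def)
  ultimately have "?P (gen_lucas k)"
    unfolding gen_lucas_def by (rule theI)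
  then show ?thesis
    by (simp add: kbonacci_def)
qed

lemma Qmat_carrier: "Qmat k \<in> carrier_mat k k"
  by (simp add: Qmat_def)

lemma lucas_mat_carrier: "lucas_mat k n \<in> carrier_mat k k"
  by (simp add: lucas_mat_def)

(* The first column of the definition is the case j = 0, whose window has k terms. *)
lemma lucas_mat_index:
  assumes "k \<ge> 1" and "i < k" and "j < k"
  shows "lucas_mat k n $$ (i, j) =
    (\<Sum>m\<in>{n - int i + int j - 1..int k + n - int i - 2}. gen_lucas k m)"
proof (cases "j = 0")
  case True
  have "(\<Sum>m\<in>{n - int i - 1..(n - int i - 1) + int k - 1}. gen_lucas k m) =
      gen_lucas k (n - int i - 1 + int k)"
    by (rule kbonacci_sum_window[OF kbonacci_gen_lucas[OF assms(1)]])
  then show ?thesis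
    using True assms by (simp add: lucas_mat_def algebra_simps)
next
  case False
  then show ?thesis
    using assms by (simp add: lucas_mat_def)
qed

lemma index_mult_mat_square:
  assumes "A \<in> carrier_mat k k" and "B \<in> carrier_mat k k" and "i < k" and "j < k"
  shows "(A * B) $$ (i, j) = (\<Sum>l<k. A $$ (i, l) * B $$ (l, j))"
  using assms by (simp add: scalar_prod_def lessThan_atLeast0)

lemma Qmat_mult_lucas_mat:
  assumes "k \<ge> 1"
  shows "Qmat k * lucas_mat k n = lucas_mat k (n + 1)"
proof (rule eq_matI)
  fix i j
  assume "i < dim_row (lucas_mat k (n + 1))" and "j < dim_col (lucas_mat k (n + 1))"
  then have ij: "i < k" "j < k"
    by (simp_all add: lucas_mat_def)
  note prod = index_mult_mat_square[OF Qmat_carrier lucas_mat_carrier ij]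
  show "(Qmat k * lucas_mat k n) $$ (i, j) = lucas_mat k (n + 1) $$ (i, j)"
  proof (cases "i = 0")
    case True
    have "(Qmat k * lucas_mat k n) $$ (i, j) =
        (\<Sum>l<k. \<Sum>m\<in>{(n + int j - 1) - int l..(int k + n - 2) - int l}. gen_lucas k m)"
      unfolding prod using True ij
      by (intro sum.cong) (auto simp: Qmat_def lucas_mat_index[OF assms] algebra_simps)
    also have "\<dots> = (\<Sum>m\<in>{(n + int j - 1) + 1..(int k + n - 2) + 1}. gen_lucas k m)"
      by (rule kbonacci_sum_windows[OF kbonacci_gen_lucas[OF assms]])
    also have "\<dots> = lucas_mat k (n + 1) $$ (i, j)"
      using True ij by (simp add: lucas_mat_index[OF assms] algebra_simps)
    finally show ?thesis .
  next
    case False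
    have "(Qmat k * lucas_mat k n) $$ (i, j) =
        (\<Sum>l<k. if l = i - 1 then lucas_mat k n $$ (l, j) else 0)"
      unfolding prod using False ij by (intro sum.cong) (auto simp: Qmat_def)
    also have "\<dots> = lucas_mat k n $$ (i - 1, j)"
      using ij by simp
    also have "\<dots> = lucas_mat k (n + 1) $$ (i, j)"
      using False ij by (simp add: lucas_mat_index[OF assms] of_nat_diff algebra_simps)
    finally show ?thesis .
  qed
qed (simp_all add: Qmat_def lucas_mat_def)

lemma lucas_mat_mult_Qmat:
  assumes "k \<ge> 2"
  shows "lucas_mat k n * Qmat k = lucas_mat k (n + 1)"
proof (rule eq_matI)
  have k: "k \<ge> 1"
    using assms by simp
  fix i j
  assume "i < dim_row (lucas_mat k (n + 1))" and "j < dim_col (lucas_mat k (n + 1))"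
  then have ij: "i < k" "j < k"
    by (simp_all add: lucas_mat_def)
  let ?L = "lucas_mat k n"
  have "(?L * Qmat k) $$ (i, j) = (\<Sum>l<k. ?L $$ (i, l) * Qmat k $$ (l, j))"
    by (rule index_mult_mat_square[OF lucas_mat_carrier Qmat_carrier ij])
  also have "\<dots> = (\<Sum>l<k. (if l = 0 then ?L $$ (i, l) else 0) +
                          (if l = j + 1 then ?L $$ (i, l) else 0))"
    using ij by (intro sum.cong) (auto simp: Qmat_def)
  also have "\<dots> = ?L $$ (i, 0) + (if j + 1 < k then ?L $$ (i, j + 1) else 0)"
    using k by (simp add: sum.distrib)
  also have "\<dots> = lucas_mat k (n + 1) $$ (i, j)"
  proof (cases "j + 1 < k")
    case True
    define a b where "a = n - int i + int j" and "b = int k + n - int i - 2"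
    have "?L $$ (i, 0) = gen_lucas k (1 + b)"
      using ij by (simp add: lucas_mat_def b_def algebra_simps)
    moreover have "?L $$ (i, j + 1) = (\<Sum>m\<in>{a..b}. gen_lucas k m)"
      using True ij by (simp add: lucas_mat_index[OF k] a_def b_def algebra_simps)
    moreover have "lucas_mat k (n + 1) $$ (i, j) = (\<Sum>m\<in>{a..1 + b}. gen_lucas k m)"
      using ij by (simp add: lucas_mat_index[OF k] a_def b_def algebra_simps)
    moreover have "a \<le> 1 + b"
      using True by (simp add: a_def b_def)
    ultimately show ?thesis
      using True by (simp add: atLeastAtMostPlus1_int_conv)
  next
    case False
    then have "j = k - 1"
      using ij by simp
    then show ?thesis
      using False ij assms by (simp add: lucas_mat_def of_nat_diff algebra_simps)
  qed
  finally show "(?L * Qmat k) $$ (i, j) = lucas_mat k (n + 1) $$ (i, j)" .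
qed (simp_all add: Qmat_def lucas_mat_def)

lemma Qmat_pow_mult_lucas_mat:
  assumes "k \<ge> 1"
  shows "Qmat k ^\<^sub>m m * lucas_mat k n = lucas_mat k (n + int m)"
proof (induction m arbitrary: n)
  case 0
  show ?case
    using lucas_mat_carrier[of k n] by (simp add: Qmat_def)
next
  case (Suc m)
  have "Qmat k ^\<^sub>m Suc m * lucas_mat k n = Qmat k ^\<^sub>m m * (Qmat k * lucas_mat k n)"
    by (simp add: assoc_mult_mat[OF pow_carrier_mat[OF Qmat_carrier] Qmat_carrier lucas_mat_carrier])
  also have "\<dots> = lucas_mat k (n + int (Suc m))"
    by (simp add: Qmat_mult_lucas_mat[OF assms] Suc.IH algebra_simps)
  finally show ?case .
qed

lemma pow_mat_commute:
  fixes A B :: "'a :: semiring_1 mat"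
  assumes "A \<in> carrier_mat n n" and "B \<in> carrier_mat n n" and "A * B = B * A"
  shows "A ^\<^sub>m m * B = B * A ^\<^sub>m m"
proof -
  interpret semiring "ring_mat TYPE('a) n ()"
    by (rule semiring_mat)
  have pow: "C ^\<^sub>m m = C [^]\<^bsub>ring_mat TYPE('a) n ()\<^esub> m" if "C \<in> carrier_mat n n" for C
    by (rule pow_mat_ring_pow[OF that])
  show ?thesis
    using group_commutes_pow[of A B m] assms by (simp add: pow ring_mat_simps)
qed

lemma pow_mat_mult_distrib:
  fixes A B :: "'a :: semiring_1 mat"
  assumes "A \<in> carrier_mat n n" and "B \<in> carrier_mat n n" and "A * B = B * A"
  shows "(A * B) ^\<^sub>m m = A ^\<^sub>m m * B ^\<^sub>m m"
proof -
  interpret semiring "ring_mat TYPE('a) n ()"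
    by (rule semiring_mat)
  have pow: "C ^\<^sub>m m = C [^]\<^bsub>ring_mat TYPE('a) n ()\<^esub> m" if "C \<in> carrier_mat n n" for C
    by (rule pow_mat_ring_pow[OF that])
  show ?thesis
    using pow_mult_distrib[of A B m] assms by (simp add: pow ring_mat_simps)
qed

theorem theorem3:
  fixes k n :: nat
  assumes "k \<ge> 2" and "n \<ge> 1"
  shows "lucas_mat k 1 ^\<^sub>m n = lucas_mat k (int n) * lucas_mat k 0 ^\<^sub>m (n - 1)"
proof -
  have k: "k \<ge> 1"
    using assms(1) by simp
  let ?Q = "Qmat k" and ?L = "lucas_mat k"
  have commute: "?Q * ?L 0 = ?L 0 * ?Q"
    using Qmat_mult_lucas_mat[OF k] lucas_mat_mult_Qmat[OF assms(1)] by simp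
  obtain p where n: "n = Suc p"
    using assms(2) by (cases n) auto
  have "?L 1 ^\<^sub>m n = (?Q * ?L 0) ^\<^sub>m n"
    using Qmat_mult_lucas_mat[OF k, of 0] by simp
  also have "\<dots> = ?Q ^\<^sub>m n * ?L 0 ^\<^sub>m n"
    by (rule pow_mat_mult_distrib[OF Qmat_carrier lucas_mat_carrier commute])
  also have "?L 0 ^\<^sub>m n = ?L 0 * ?L 0 ^\<^sub>m p"
    using n pow_mat_commute[OF lucas_mat_carrier[of k 0] lucas_mat_carrier[of k 0] refl, of p]
    by simp
  also have "?Q ^\<^sub>m n * (?L 0 * ?L 0 ^\<^sub>m p) = (?Q ^\<^sub>m n * ?L 0) * ?L 0 ^\<^sub>m p"
    by (rule assoc_mult_mat[symmetric, OF pow_carrier_mat[OF Qmat_carrier] lucas_mat_carrier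
          pow_carrier_mat[OF lucas_mat_carrier]])
  also have "\<dots> = ?L (int n) * ?L 0 ^\<^sub>m (n - 1)"
    using n Qmat_pow_mult_lucas_mat[OF k, of n 0] by simp
  finally show ?thesis .
qed

end
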